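(* Let $\gamma\in[0,1)$ and $\Omega_{\gamma}=\{z\in\mathbb{C}:|z+\frac{\gamma}{1-\gamma}|<\frac{1}{1-\gamma}\}$. Let $f=h+\overline{g}$ be a harmonic mapping in $\Omega_\gamma$ with $h,g$ analytic in $\Omega_\gamma$, $|h(z)|\le 1$ on $\Omega_\gamma$, $h(z)=\sum_{n=0}^\infty a_n\left(z+\frac{\gamma}{1-\gamma}\right)^n$ and $g(z)=\sum_{n=1}^\infty b_n\left(z+\frac{\gamma}{1-\gamma}\right)^n$ in $\Omega_\gamma$, and $|g'(z)|\le k|h'(z)|$ in $\Omega_\gamma$ for some $k\in[0,1)$. Then $$\sum_{n=0}^\infty \frac{|a_n|}{(1-\gamma)^n}\rho^n+\sum_{n=1}^\infty\frac{|b_n|}{(1-\gamma)^n}\rho^n\le 1$$ for $|(1-\gamma)z+\gamma|=\rho\le\rho_0=1/(2k+3)$. The number $\rho_0$ is best possible.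
   Context: $\Omega_\gamma$ is the open disk centered at $-\gamma/(1-\gamma)$ of radius $1/(1-\gamma)$. *)

theory Defs
  imports "HOL-Analysis.Analysis"
begin

definition omega_center :: "real \<Rightarrow> complex" where
  "omega_center \<gamma> = complex_of_real (- \<gamma> / (1 - \<gamma>))"

definition Omega :: "real \<Rightarrow> complex set" where
  "Omega \<gamma> = ball (omega_center \<gamma>) (1 / (1 - \<gamma>))"

text \<open>Hypotheses of the theorem on the pair (h, g) with coefficient sequences a, b
  (b is indexed so that b n is the coefficient of (z - c)^n, only n >= 1 used).\<close>
definition harm_hyp ::
  "real \<Rightarrow> real \<Rightarrow> (complex \<Rightarrow> complex) \<Rightarrow> (complex \<Rightarrow> complex)
     \<Rightarrow> (nat \<Rightarrow> complex) \<Rightarrow> (nat \<Rightarrow> complex) \<Rightarrow> bool" where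
  "harm_hyp \<gamma> k h g a b \<longleftrightarrow>
     h holomorphic_on Omega \<gamma> \<and> g holomorphic_on Omega \<gamma> \<and>
     (\<forall>z\<in>Omega \<gamma>. norm (h z) \<le> 1) \<and>
     (\<forall>z\<in>Omega \<gamma>. (\<lambda>n. a n * (z - omega_center \<gamma>) ^ n) sums h z) \<and>
     (\<forall>z\<in>Omega \<gamma>. (\<lambda>n. b (Suc n) * (z - omega_center \<gamma>) ^ Suc n) sums g z) \<and>
     (\<forall>z\<in>Omega \<gamma>. norm (deriv g z) \<le> k * norm (deriv h z))"

definition bohr_ineq :: "real \<Rightarrow> (nat \<Rightarrow> complex) \<Rightarrow> (nat \<Rightarrow> complex) \<Rightarrow> real \<Rightarrow> bool" where
  "bohr_ineq \<gamma> a b \<rho> \<longleftrightarrow>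
     summable (\<lambda>n. norm (a n) / (1 - \<gamma>) ^ n * \<rho> ^ n) \<and>
     summable (\<lambda>n. norm (b (Suc n)) / (1 - \<gamma>) ^ Suc n * \<rho> ^ Suc n) \<and>
     (\<Sum>n. norm (a n) / (1 - \<gamma>) ^ n * \<rho> ^ n)
       + (\<Sum>n. norm (b (Suc n)) / (1 - \<gamma>) ^ Suc n * \<rho> ^ Suc n) \<le> 1"

end

(*
  Rescaling z |-> (1 - gamma) z + gamma maps Omega_gamma onto the unit disk and divides the n-th
  coefficients by (1 - gamma)^n, so it suffices to treat gamma = 0.

  On the unit disk, Wiener's inequality |a_n| <= 1 - |a_0|^2 (Schwarz-Pick at 0 applied to the
  n-section sum_q a_(qn) w^q of h) bounds the tail sum_(n>=1) |a_n| r^n by T = (1 - |a_0|^2) r/(1 - r).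
  The dilatation omega = g'/h' extends holomorphically with |omega| <= k, so by Bohr's theorem
  sum |omega_n| r^n <= k for r <= 1/3; comparing coefficients in g' = omega h' gives
  |b_(n+1)| <= sum_i |omega_i| |a_(n+1-i)|, hence sum |b_n| r^n <= k T. For r <= 1/(2k+3) this yields
  |a_0| + (1 + k) T <= |a_0| + (1 - |a_0|^2)/2 <= 1.

  Sharpness: for h = (alpha - z)/(1 - alpha z) and g = k (h - alpha) the Bohr sum at r equals
  alpha + (1 + k)(1 - alpha^2) r/(1 - alpha r), which exceeds 1 for alpha close to 1 when r > 1/(2k+3).
*)
theory Submission
  imports Defs "HOL-Complex_Analysis.Complex_Analysis"
begin

lemma sum_roots_of_unity_power:
  assumes "n \<ge> 1"
  defines "\<epsilon> \<equiv> exp (2 * of_real pi * \<i> / of_nat n) :: complex"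
  shows "(\<Sum>j<n. (\<epsilon> ^ j) ^ m) = (if n dvd m then of_nat n else 0)"
proof -
  have \<epsilon>m: "\<epsilon> ^ m = exp (2 * of_real pi * \<i> * of_nat m / of_nat n)"
    unfolding \<epsilon>_def exp_of_nat_mult[symmetric] by (simp add: field_simps)
  have swap: "(\<epsilon> ^ j) ^ m = (\<epsilon> ^ m) ^ j" for j
    by (simp add: power_mult[symmetric] mult.commute)
  show ?thesis
  proof (cases "n dvd m")
    case True
    then have "\<epsilon> ^ m = 1" using complex_root_unity_eq_1[OF assms(1), of m] \<epsilon>m by simp
    then show ?thesis using True by (simp add: swap)
  next
    case False
    then have "\<epsilon> ^ m \<noteq> 1" using complex_root_unity_eq_1[OF assms(1), of m] \<epsilon>m by simp
    moreover have "(\<epsilon> ^ m) ^ n = 1" using complex_root_unity[of n m] assms(1) unfolding \<epsilon>m by simp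
    ultimately show ?thesis using False by (simp add: swap sum_gp_strict)
  qed
qed

lemma has_fps_expansion_of_sums_on_ball:
  fixes c :: "nat \<Rightarrow> complex"
  assumes "\<forall>z\<in>ball 0 r. (\<lambda>n. c n * z ^ n) sums f z" "r > 0"
  shows "f has_fps_expansion Abs_fps c"
proof (rule has_fps_expansionI)
  have "eventually (\<lambda>z. z \<in> ball (0::complex) r) (nhds 0)"
    using assms(2) by (intro eventually_nhds_in_open) auto
  then show "\<forall>\<^sub>F z in nhds 0. (\<lambda>n. fps_nth (Abs_fps c) n * z ^ n) sums f z"
    by eventually_elim (use assms(1) in auto)
qed

lemma holomorphic_on_ball_of_sums:
  fixes d :: "nat \<Rightarrow> complex"
  assumes sums: "\<forall>w\<in>ball 0 r. (\<lambda>q. d q * w ^ q) sums F w" and r: "r > 0"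
  shows "F holomorphic_on ball 0 r" "deriv F 0 = d 1"
proof -
  have "fps_conv_radius (Abs_fps d) \<ge> r"
    unfolding fps_conv_radius_def
  proof (rule conv_radius_geI_ex')
    fix s :: real assume "0 < s" "ereal s < r"
    then have "of_real s \<in> ball (0::complex) r" by simp
    then show "summable (\<lambda>q. fps_nth (Abs_fps d) q * of_real s ^ q)"
      using sums by (auto simp: sums_iff)
  qed
  then have "ball 0 r \<subseteq> eball 0 (fps_conv_radius (Abs_fps d))"
    by (rule ball_eball_mono)
  then have "eval_fps (Abs_fps d) holomorphic_on ball 0 r"
    by (rule holomorphic_on_eval_fps)
  also have "?this \<longleftrightarrow> F holomorphic_on ball 0 r"
    using sums by (intro holomorphic_cong) (auto simp: eval_fps_def sums_iff)
  finally show "F holomorphic_on ball 0 r" .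
  have "F has_fps_expansion Abs_fps d"
    by (rule has_fps_expansion_of_sums_on_ball[OF sums r])
  from fps_nth_fps_expansion[OF this, of 1] show "deriv F 0 = d 1" by simp
qed

lemma Schwarz_Pick_deriv_0_strict:
  assumes hol: "\<phi> holomorphic_on ball 0 1" and lt1: "\<forall>z\<in>ball 0 1. norm (\<phi> z) < 1"
  shows "norm (deriv \<phi> 0) \<le> 1 - norm (\<phi> 0) ^ 2"
proof -
  define \<alpha> where "\<alpha> = \<phi> 0"
  have \<alpha>: "norm \<alpha> < 1" using lt1 by (simp add: \<alpha>_def)
  have \<alpha>2: "norm \<alpha> ^ 2 < 1" using \<alpha> by (simp add: power_less_one_iff)
  have denom: "1 - cnj \<alpha> * \<alpha> = of_real (1 - norm \<alpha> ^ 2)"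
    using complex_norm_square[of \<alpha>] by (simp add: mult.commute)
  have nz: "1 - cnj \<alpha> * \<alpha> \<noteq> 0" unfolding denom of_real_eq_0_iff using \<alpha>2 by simp
  define \<psi> where "\<psi> = Moebius_function 0 \<alpha> \<circ> \<phi>"
  have "\<psi> holomorphic_on ball 0 1"
    unfolding \<psi>_def using hol lt1 \<alpha>
    by (intro holomorphic_on_compose_gen[where t = "ball 0 1"] Moebius_function_holomorphic) auto
  moreover have "\<psi> 0 = 0" by (simp add: \<psi>_def \<alpha>_def Moebius_function_eq_zero)
  moreover have "norm (\<psi> z) < 1" if "norm z < 1" for z
    unfolding \<psi>_def using lt1 that \<alpha> by (auto intro: Moebius_function_norm_lt_1)
  ultimately have "norm (deriv \<psi> 0) \<le> 1"
    using Schwarz_Lemma(2)[of \<psi> 0] by simp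
  have d\<phi>: "(\<phi> has_field_derivative deriv \<phi> 0) (at 0)"
    using hol by (intro holomorphic_derivI[of _ "ball 0 1"]) auto
  have "(\<psi> has_field_derivative deriv \<phi> 0 / (1 - cnj \<alpha> * \<alpha>)) (at 0)"
    unfolding \<psi>_def o_def Moebius_function_simple
    by (rule derivative_eq_intros d\<phi> refl)+ (use nz in \<open>auto simp: \<alpha>_def power2_eq_square\<close>)
  then have d\<psi>: "deriv \<psi> 0 = deriv \<phi> 0 / (1 - cnj \<alpha> * \<alpha>)" by (rule DERIV_imp_deriv)
  have "norm (deriv \<psi> 0) = norm (deriv \<phi> 0) / (1 - norm \<alpha> ^ 2)"
    unfolding d\<psi> denom norm_divide norm_of_real using \<alpha>2 by simp
  then show ?thesis
    using \<open>norm (deriv \<psi> 0) \<le> 1\<close> \<alpha>2 by (simp add: \<alpha>_def divide_le_eq)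
qed

lemma Schwarz_Pick_deriv_0:
  assumes hol: "\<phi> holomorphic_on ball 0 1" and le1: "\<forall>z\<in>ball 0 1. norm (\<phi> z) \<le> 1"
  shows "norm (deriv \<phi> 0) \<le> 1 - norm (\<phi> 0) ^ 2"
proof -
  have "t * norm (deriv \<phi> 0) \<le> 1 - t ^ 2 * norm (\<phi> 0) ^ 2" if t: "t \<in> {0<..<1}" for t
  proof -
    have "norm (deriv (\<lambda>z. of_real t * \<phi> z) 0) \<le> 1 - norm (of_real t * \<phi> 0) ^ 2"
    proof (rule Schwarz_Pick_deriv_0_strict)
      show "\<forall>z\<in>ball 0 1. norm (of_real t * \<phi> z) < 1"
        using le1 t by (auto simp: norm_mult intro: le_less_trans[OF mult_left_le])
    qed (use hol in \<open>auto intro!: holomorphic_intros\<close>)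
    moreover have "deriv (\<lambda>z. of_real t * \<phi> z) 0 = of_real t * deriv \<phi> 0"
      using hol by (intro deriv_cmult) (auto intro!: holomorphic_on_imp_differentiable_at)
    ultimately show ?thesis using t by (simp add: norm_mult power_mult_distrib)
  qed
  then have "eventually (\<lambda>t. t * norm (deriv \<phi> 0) \<le> 1 - t ^ 2 * norm (\<phi> 0) ^ 2) (at_left 1)"
    using eventually_at_left_real[of 0 "1::real"] by (auto elim: eventually_mono)
  moreover have "((\<lambda>t. t * norm (deriv \<phi> 0)) \<longlongrightarrow> 1 * norm (deriv \<phi> 0)) (at_left 1)"
    and "((\<lambda>t. 1 - t ^ 2 * norm (\<phi> 0) ^ 2) \<longlongrightarrow> 1 - 1 ^ 2 * norm (\<phi> 0) ^ 2) (at_left 1)"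
    by (intro tendsto_intros)+
  ultimately show ?thesis
    using tendsto_le[OF trivial_limit_at_left_real] by fastforce
qed

lemma power_series_section:
  fixes c :: "nat \<Rightarrow> complex"
  assumes sums: "\<forall>z\<in>ball 0 1. (\<lambda>m. c m * z ^ m) sums f z"
    and bd: "\<forall>z\<in>ball 0 1. norm (f z) \<le> 1" and n: "n \<ge> 1" and w: "w \<in> ball 0 1"
  shows "summable (\<lambda>q. c (q * n) * w ^ q)" "norm (\<Sum>q. c (q * n) * w ^ q) \<le> 1"
proof -
  obtain z where z: "z ^ n = w"
  proof (cases "w = 0")
    case True
    then show ?thesis using n that[of 0] by simp
  next
    case False
    then show ?thesis using n that[of "exp (Ln w / of_nat n)"] by (simp add: exp_of_nat_mult[symmetric])
  qed
  define \<epsilon> :: complex where "\<epsilon> = exp (2 * of_real pi * \<i> / of_nat n)"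
  define S where "S = (\<Sum>j<n. f (\<epsilon> ^ j * z))"
  have "norm z ^ n < 1" using w by (simp add: z[symmetric] norm_power)
  then have "norm z < 1" using n by (simp add: power_less_one_iff)
  moreover have "norm \<epsilon> = 1" by (simp add: \<epsilon>_def norm_exp_eq_Re)
  ultimately have rotated: "\<epsilon> ^ j * z \<in> ball 0 1" for j by (simp add: norm_mult norm_power)
  \<comment> \<open>averaging over the rotations by \<open>n\<close>-th roots of unity kills all coefficients
    whose index is not divisible by \<open>n\<close>\<close>
  have "(\<lambda>m. \<Sum>j<n. c m * (\<epsilon> ^ j * z) ^ m) sums S"
    unfolding S_def by (rule sums_sum) (use sums rotated in auto)
  moreover have "(\<Sum>j<n. c m * (\<epsilon> ^ j * z) ^ m) = (if n dvd m then of_nat n * c m * z ^ m else 0)" for m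
    using sum_roots_of_unity_power[OF n, of m]
    by (simp add: \<epsilon>_def sum_distrib_left[symmetric] power_mult_distrib mult_ac)
  ultimately have "(\<lambda>m. if n dvd m then of_nat n * c m * z ^ m else 0) sums S" by simp
  then have "(\<lambda>q. of_nat n * c (q * n) * z ^ (q * n)) sums S"
    using n by (subst (asm) sums_mono_reindex[of "\<lambda>q. q * n", symmetric])
      (auto simp: strict_mono_def dvd_def mult.commute)
  moreover have "z ^ (q * n) = w ^ q" for q
    by (simp add: z[symmetric] power_mult[symmetric] mult.commute)
  ultimately have "(\<lambda>q. of_nat n * (c (q * n) * w ^ q) / of_nat n) sums (S / of_nat n)"
    by (intro sums_divide) (simp add: mult.assoc)
  then have filtered: "(\<lambda>q. c (q * n) * w ^ q) sums (S / of_nat n)" using n by simp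
  then show "summable (\<lambda>q. c (q * n) * w ^ q)" by (rule sums_summable)
  have "norm S \<le> (\<Sum>j<n. norm (f (\<epsilon> ^ j * z)))" unfolding S_def by (rule norm_sum)
  also have "\<dots> \<le> (\<Sum>j<n. 1)" using bd rotated by (intro sum_mono) auto
  finally show "norm (\<Sum>q. c (q * n) * w ^ q) \<le> 1"
    using n filtered by (simp add: sums_iff norm_divide divide_le_eq_1)
qed

lemma Wiener_coeff_bound:
  fixes c :: "nat \<Rightarrow> complex"
  assumes sums: "\<forall>z\<in>ball 0 1. (\<lambda>m. c m * z ^ m) sums f z"
    and bd: "\<forall>z\<in>ball 0 1. norm (f z) \<le> 1" and n: "n \<ge> 1"
  shows "norm (c n) \<le> 1 - norm (c 0) ^ 2"
proof -
  define F where "F w = (\<Sum>q. c (q * n) * w ^ q)" for w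
  have F: "\<forall>w\<in>ball 0 1. (\<lambda>q. c (q * n) * w ^ q) sums F w"
    using power_series_section(1)[OF sums bd n] by (simp add: F_def summable_sums)
  have "norm (deriv F 0) \<le> 1 - norm (F 0) ^ 2"
  proof (rule Schwarz_Pick_deriv_0)
    show "F holomorphic_on ball 0 1" by (rule holomorphic_on_ball_of_sums(1)[OF F]) simp
    show "\<forall>z\<in>ball 0 1. norm (F z) \<le> 1"
      using power_series_section(2)[OF sums bd n] by (simp add: F_def)
  qed
  moreover have "deriv F 0 = c n" using holomorphic_on_ball_of_sums(2)[OF F] by simp
  moreover have "F 0 = c 0" using F by (simp add: F_def)
  ultimately show ?thesis by simp
qed

lemma geometric_tail_bound:
  fixes X :: "nat \<Rightarrow> real"
  assumes X0: "\<And>j. 0 \<le> X j" and XC: "\<And>j. X (Suc j) \<le> C" and r: "0 \<le> r" "r < 1"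
  shows "summable (\<lambda>j. X (Suc j) * r ^ Suc j)" "summable (\<lambda>j. X j * r ^ j)"
    "(\<Sum>j. X j * r ^ j) = X 0 + (\<Sum>j. X (Suc j) * r ^ Suc j)"
    "(\<Sum>j. X (Suc j) * r ^ Suc j) \<le> C * r / (1 - r)"
proof -
  have "(\<lambda>j. (C * r) * r ^ j) sums ((C * r) * (1 / (1 - r)))"
    using r by (intro sums_mult geometric_sums) simp
  then have geo: "(\<lambda>j. C * r ^ Suc j) sums (C * r / (1 - r))" by (simp add: mult_ac)
  have le: "X (Suc j) * r ^ Suc j \<le> C * r ^ Suc j" for j
    using XC r by (intro mult_right_mono) auto
  show tail: "summable (\<lambda>j. X (Suc j) * r ^ Suc j)"
    using X0 r le by (intro summable_comparison_test[OF _ sums_summable[OF geo]]) auto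
  then show full: "summable (\<lambda>j. X j * r ^ j)" by (subst summable_Suc_iff[symmetric])
  show "(\<Sum>j. X j * r ^ j) = X 0 + (\<Sum>j. X (Suc j) * r ^ Suc j)"
    using suminf_split_head[OF full] by simp
  show "(\<Sum>j. X (Suc j) * r ^ Suc j) \<le> C * r / (1 - r)"
    using suminf_le[OF le tail sums_summable[OF geo]] sums_unique[OF geo] by simp
qed

theorem Bohr_one_third:
  fixes c :: "nat \<Rightarrow> complex"
  assumes sums: "\<forall>z\<in>ball 0 1. (\<lambda>n. c n * z ^ n) sums f z"
    and bd: "\<forall>z\<in>ball 0 1. norm (f z) \<le> K" and r: "0 \<le> r" "r \<le> 1/3"
  shows "summable (\<lambda>n. norm (c n) * r ^ n)" "(\<Sum>n. norm (c n) * r ^ n) \<le> K"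
proof -
  have c0: "c 0 = f 0" using sums[rule_format, of 0] by simp
  have bound: "summable (\<lambda>n. norm (c n) * r ^ n) \<and> (\<Sum>n. norm (c n) * r ^ n) \<le> L" if KL: "K < L" for L
  proof -
    have "norm (c 0) \<le> K" using bd c0 by simp
    with that have L: "L > 0" "norm (c 0) \<le> L" using norm_ge_zero[of "c 0"] by linarith+
    define C where "C = L - norm (c 0) ^ 2 / L"
    have "norm (c n / of_real L) \<le> 1 - norm (c 0 / of_real L) ^ 2" if "n \<ge> 1" for n
    proof (rule Wiener_coeff_bound[OF _ _ that])
      show "\<forall>z\<in>ball 0 1. (\<lambda>m. c m / of_real L * z ^ m) sums (f z / of_real L)"
        using sums sums_divide by (fastforce simp: field_simps)
      show "\<forall>z\<in>ball 0 1. norm (f z / of_real L) \<le> 1"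
        using bd KL L by (fastforce simp: norm_divide divide_le_eq)
    qed
    then have "norm (c (Suc j)) / L \<le> 1 - (norm (c 0) / L) ^ 2" for j
      using L by (simp add: norm_divide)
    moreover have "(1 - (norm (c 0) / L) ^ 2) * L = C"
      using L by (simp add: C_def field_simps power2_eq_square)
    ultimately have coeff: "norm (c (Suc j)) \<le> C" for j
      by (simp only: pos_divide_le_eq[OF L(1)])
    have "norm (c 0) ^ 2 \<le> L ^ 2" using L by (intro power_mono) auto
    then have "0 \<le> C" using L by (simp add: C_def divide_le_eq power2_eq_square)
    moreover have "r / (1 - r) \<le> 1 / 2" using r by (simp add: field_simps)
    ultimately have "C * r / (1 - r) \<le> C / 2"
      using mult_left_mono[of "r / (1 - r)" "1 / 2" C] by simp
    then have "norm (c 0) + C * r / (1 - r) \<le> norm (c 0) + C / 2" by simp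
    also have "\<dots> = L - (L - norm (c 0)) ^ 2 / (2 * L)"
      using L by (simp add: C_def field_simps power2_eq_square)
    also have "\<dots> \<le> L" using L by simp
    finally show ?thesis
      using geometric_tail_bound[of "\<lambda>n. norm (c n)" C r, OF norm_ge_zero coeff] r by simp
  qed
  show "summable (\<lambda>n. norm (c n) * r ^ n)" using bound[of "K + 1"] by linarith
  show "(\<Sum>n. norm (c n) * r ^ n) \<le> K"
  proof (rule dense_ge)
    show "(\<Sum>n. norm (c n) * r ^ n) \<le> L" if "K < L" for L using bound[OF that] ..
  qed
qed

lemma dominated_quotient_removable:
  fixes P Q :: "complex \<Rightarrow> complex"
  assumes holP: "P holomorphic_on ball z0 r" and holQ: "Q holomorphic_on ball z0 r" and r: "r > 0"
    and nz: "\<And>w. w \<in> ball z0 r - {z0} \<Longrightarrow> P w \<noteq> 0"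
    and dom: "\<And>w. w \<in> ball z0 r \<Longrightarrow> norm (Q w) \<le> k * norm (P w)"
  defines "\<omega> \<equiv> remove_sings (\<lambda>w. Q w / P w)"
  shows "\<omega> analytic_on {z0}" "norm (\<omega> z0) \<le> k" "Q z0 = \<omega> z0 * P z0"
proof -
  let ?q = "\<lambda>w. Q w / P w"
  have hol: "?q holomorphic_on ball z0 r - {z0}"
    using holP holQ nz by (intro holomorphic_intros) (auto elim: holomorphic_on_subset)
  then have iso: "isolated_singularity_at ?q z0"
    unfolding isolated_singularity_at_def using r by (intro exI[of _ r]) (simp add: analytic_on_open open_delete)
  have bounded: "norm (?q w) \<le> k" if "w \<in> ball z0 r - {z0}" for w
    using dom[of w] nz[OF that] that by (simp add: norm_divide divide_le_eq)
  have near: "eventually (\<lambda>w. w \<in> ball z0 r - {z0}) (at z0)"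
    using r by (intro eventually_at_in_open) auto
  then have "eventually (\<lambda>w. norm (?q w) \<le> k) (at z0)"
    by eventually_elim (rule bounded)
  then obtain g where g: "g holomorphic_on ball z0 r" "\<forall>w\<in>ball z0 r - {z0}. g w = ?q w"
    using holomorphic_on_extend_bounded[OF hol] r by (auto simp: interior_open)
  have "isCont g z0"
    using g(1) r by (intro holomorphic_on_imp_continuous_on[THEN continuous_on_interior]) (auto simp: interior_open)
  then have "(g \<longlongrightarrow> g z0) (at z0)" by (simp add: isCont_def)
  moreover have "eventually (\<lambda>w. g w = ?q w) (at z0)"
    using near by eventually_elim (use g(2) in auto)
  ultimately have lim: "(?q \<longlongrightarrow> g z0) (at z0)" by (rule Lim_transform_eventually)
  show "\<omega> analytic_on {z0}" unfolding \<omega>_def by (rule remove_sings_analytic_at[OF iso lim])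
  have \<omega>z0: "\<omega> z0 = g z0" unfolding \<omega>_def using lim by (rule remove_sings_eqI)
  show "norm (\<omega> z0) \<le> k"
    unfolding \<omega>z0 by (rule Lim_norm_ubound[OF _ lim]) (use \<open>eventually (\<lambda>w. norm (?q w) \<le> k) (at z0)\<close> in auto)
  show "Q z0 = \<omega> z0 * P z0"
  proof (cases "P z0 = 0")
    case True
    then show ?thesis using dom[of z0] r by simp
  next
    case False
    have "isCont P z0" "isCont Q z0"
      using holP holQ r by (auto intro!: continuous_on_interior holomorphic_on_imp_continuous_on
          simp: interior_open)
    then have "isCont ?q z0" using False by (intro continuous_intros)
    then have "g z0 = ?q z0" using lim by (intro LIM_unique[OF lim]) (simp add: isCont_def)
    then show ?thesis using False by (simp add: \<omega>z0)
  qed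
qed

lemma holomorphic_quotient_of_dominated:
  fixes P Q :: "complex \<Rightarrow> complex"
  assumes holP: "P holomorphic_on S" and holQ: "Q holomorphic_on S" and S: "open S" "connected S"
    and k: "0 \<le> k" and dom: "\<And>z. z \<in> S \<Longrightarrow> norm (Q z) \<le> k * norm (P z)"
  obtains \<omega> where "\<omega> holomorphic_on S" "\<And>z. z \<in> S \<Longrightarrow> norm (\<omega> z) \<le> k"
    "\<And>z. z \<in> S \<Longrightarrow> Q z = \<omega> z * P z"
proof (cases "\<exists>\<beta>\<in>S. P \<beta> \<noteq> 0")
  case False
  then have "\<And>z. z \<in> S \<Longrightarrow> Q z = 0" using dom by fastforce
  with False k show ?thesis by (intro that[of "\<lambda>_. 0"]) auto
next
  case True
  then obtain \<beta> where \<beta>: "\<beta> \<in> S" "P \<beta> \<noteq> 0" by blast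
  define \<omega> where "\<omega> = remove_sings (\<lambda>w. Q w / P w)"
  have local: "\<omega> analytic_on {z0} \<and> norm (\<omega> z0) \<le> k \<and> Q z0 = \<omega> z0 * P z0" if z0: "z0 \<in> S" for z0
  proof -
    have "eventually (\<lambda>w. P w \<noteq> 0 \<and> w \<in> S) (at z0)"
      by (rule non_zero_neighbour_alt[OF holP S z0 \<beta>])
    then obtain r1 where r1: "r1 > 0" "\<And>w. w \<in> ball z0 r1 - {z0} \<Longrightarrow> P w \<noteq> 0"
      unfolding eventually_at by (auto simp: dist_commute)
    obtain r2 where r2: "r2 > 0" "ball z0 r2 \<subseteq> S" using S(1) z0 openE by blast
    define r where "r = min r1 r2"
    have r: "r > 0" "ball z0 r \<subseteq> S" using r1 r2 by (auto simp: r_def)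
    have hol: "P holomorphic_on ball z0 r" "Q holomorphic_on ball z0 r"
      using holP holQ r(2) by (auto elim: holomorphic_on_subset)
    have nz: "P w \<noteq> 0" if "w \<in> ball z0 r - {z0}" for w
      using r1(2) that by (auto simp: r_def)
    have dom': "norm (Q w) \<le> k * norm (P w)" if "w \<in> ball z0 r" for w
      using dom r(2) that by blast
    show ?thesis
      unfolding \<omega>_def using dominated_quotient_removable[OF hol r(1) nz dom'] by blast
  qed
  have "\<omega> analytic_on S" by (rule analytic_on_analytic_at[THEN iffD2]) (use local in blast)
  then show ?thesis using local by (intro that[of \<omega>]) (auto intro: analytic_imp_holomorphic)
qed

lemma fps_deriv_eq_mult_coeff_bound:
  fixes A B W :: "complex fps"
  assumes "fps_deriv B = W * fps_deriv A"
  shows "norm (fps_nth B (Suc n)) \<le> (\<Sum>i\<le>n. norm (fps_nth W i) * norm (fps_nth A (Suc (n - i))))"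
proof -
  have "real (Suc n) * norm (fps_nth B (Suc n)) = norm (fps_nth (fps_deriv B) n)"
    by (simp only: fps_deriv_nth norm_mult norm_of_nat Suc_eq_plus1)
  also have "\<dots> = norm (\<Sum>i\<le>n. fps_nth W i * (of_nat (Suc (n - i)) * fps_nth A (Suc (n - i))))"
    by (simp add: assms fps_mult_nth atLeast0AtMost)
  also have "\<dots> \<le> (\<Sum>i\<le>n. norm (fps_nth W i * (of_nat (Suc (n - i)) * fps_nth A (Suc (n - i)))))"
    by (rule norm_sum)
  also have "\<dots> = (\<Sum>i\<le>n. real (Suc (n - i)) * (norm (fps_nth W i) * norm (fps_nth A (Suc (n - i)))))"
    by (simp only: norm_mult norm_of_nat mult.left_commute)
  also have "\<dots> \<le> (\<Sum>i\<le>n. real (Suc n) * (norm (fps_nth W i) * norm (fps_nth A (Suc (n - i)))))"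
    by (intro sum_mono mult_right_mono) auto
  finally show ?thesis by (simp add: sum_distrib_left[symmetric])
qed

lemma Cauchy_product_majorant:
  fixes u x y :: "nat \<Rightarrow> real"
  assumes u: "\<And>n. 0 \<le> u n" "\<And>n. u n \<le> (\<Sum>i\<le>n. x i * y (n - i))"
    and x: "\<And>n. 0 \<le> x n" "summable x" and y: "\<And>n. 0 \<le> y n" "summable y"
  shows "summable u" "suminf u \<le> suminf x * suminf y"
proof -
  have "(\<lambda>n. \<Sum>i\<le>n. x i * y (n - i)) sums (suminf x * suminf y)"
    using x y by (intro Cauchy_product_sums) auto
  then have "summable (\<lambda>n. \<Sum>i\<le>n. x i * y (n - i))"
    and "(\<Sum>n. \<Sum>i\<le>n. x i * y (n - i)) = suminf x * suminf y" by (simp_all add: sums_iff)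
  moreover show "summable u"
    by (rule summable_comparison_test'[OF calculation(1), of 0]) (use u in auto)
  ultimately show "suminf u \<le> suminf x * suminf y"
    using suminf_le[of u "\<lambda>n. \<Sum>i\<le>n. x i * y (n - i)", OF u(2)] by simp
qed

lemma omega_center_0 [simp]: "omega_center 0 = 0"
  by (simp add: omega_center_def)

lemma Omega_0 [simp]: "Omega 0 = ball 0 1"
  by (simp add: Omega_def)

lemma bohr_ineq_0_iff:
  "bohr_ineq 0 a b \<rho> \<longleftrightarrow>
     summable (\<lambda>n. norm (a n) * \<rho> ^ n) \<and> summable (\<lambda>n. norm (b (Suc n)) * \<rho> ^ Suc n) \<and>
     (\<Sum>n. norm (a n) * \<rho> ^ n) + (\<Sum>n. norm (b (Suc n)) * \<rho> ^ Suc n) \<le> 1"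
  by (simp add: bohr_ineq_def)

lemma coeff_bound_of_deriv_factorization:
  fixes A B W :: "nat \<Rightarrow> complex"
  assumes sA: "\<forall>z\<in>ball 0 1. (\<lambda>n. A n * z ^ n) sums H z"
    and sB: "\<forall>z\<in>ball 0 1. (\<lambda>n. B (Suc n) * z ^ Suc n) sums G z"
    and sW: "\<forall>z\<in>ball 0 1. (\<lambda>n. W n * z ^ n) sums \<omega> z"
    and factor: "\<And>z. z \<in> ball 0 1 \<Longrightarrow> deriv G z = \<omega> z * deriv H z"
  shows "norm (B (Suc n)) \<le> (\<Sum>i\<le>n. norm (W i) * norm (A (Suc (n - i))))"
proof -
  define B0 where "B0 n = (if n = 0 then 0 else B n)" for n
  have "\<forall>z\<in>ball 0 1. (\<lambda>n. B0 n * z ^ n) sums G z"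
  proof
    fix z :: complex assume "z \<in> ball 0 1"
    then have "(\<lambda>n. B0 (Suc n) * z ^ Suc n) sums G z" using sB by (simp add: B0_def)
    then show "(\<lambda>n. B0 n * z ^ n) sums G z" by (subst (asm) sums_Suc_iff) (simp add: B0_def)
  qed
  then have "deriv G has_fps_expansion fps_deriv (Abs_fps B0)"
    by (intro has_fps_expansion_deriv has_fps_expansion_of_sums_on_ball) auto
  moreover have "eventually (\<lambda>z. z \<in> ball 0 1) (nhds (0::complex))"
    by (intro eventually_nhds_in_open) auto
  then have "eventually (\<lambda>z. \<omega> z * deriv H z = deriv G z) (nhds 0)"
    by eventually_elim (simp add: factor)
  then have "deriv G has_fps_expansion Abs_fps W * fps_deriv (Abs_fps A)"
    by (subst has_fps_expansion_cong[symmetric, OF _ refl])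
      (use has_fps_expansion_of_sums_on_ball[OF sW] has_fps_expansion_of_sums_on_ball[OF sA]
         in \<open>auto intro!: has_fps_expansion_mult has_fps_expansion_deriv\<close>)
  ultimately have "fps_deriv (Abs_fps B0) = Abs_fps W * fps_deriv (Abs_fps A)"
    by (rule fps_expansion_unique_complex)
  then show ?thesis
    using fps_deriv_eq_mult_coeff_bound[of "Abs_fps B0" "Abs_fps W" "Abs_fps A" n] by (simp add: B0_def)
qed

lemma Bohr_sum_le_1_arith:
  fixes a0 T k r :: real
  assumes a0: "0 \<le> a0" "a0 \<le> 1" and T: "T \<le> (1 - a0 ^ 2) * r / (1 - r)"
    and k: "0 \<le> k" and r: "0 \<le> r" "r \<le> 1 / (2 * k + 3)"
  shows "a0 + T + k * T \<le> 1"
proof -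
  have "1 / (2 * k + 3) < 1" using k by (simp add: field_simps)
  then have r1: "r < 1" using r by linarith
  have "r * (2 * k + 3) \<le> 1" using r k by (simp add: field_simps)
  then have "(1 + k) * (r / (1 - r)) \<le> 1 / 2" using r1 by (simp add: field_simps)
  moreover have "0 \<le> 1 - a0 ^ 2" using a0 by (simp add: power_le_one)
  ultimately have half: "(1 - a0 ^ 2) * ((1 + k) * (r / (1 - r))) \<le> (1 - a0 ^ 2) * (1 / 2)"
    by (intro mult_left_mono)
  have "(1 + k) * T \<le> (1 + k) * ((1 - a0 ^ 2) * r / (1 - r))"
    using T k by (intro mult_left_mono) auto
  also have "\<dots> = (1 - a0 ^ 2) * ((1 + k) * (r / (1 - r)))" by (simp add: mult_ac)
  also have "\<dots> \<le> (1 - a0 ^ 2) / 2" using half by simp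
  finally have "T + k * T \<le> (1 - a0 ^ 2) / 2" by (simp add: algebra_simps)
  moreover have "a0 + (1 - a0 ^ 2) / 2 \<le> 1"
    using zero_le_power2[of "1 - a0"] by (simp add: power2_eq_square field_simps)
  ultimately show ?thesis by linarith
qed

theorem Bohr_harmonic_unit_disk:
  fixes k r :: real
  assumes hyp: "harm_hyp 0 k H G A B" and k: "0 \<le> k" and r: "0 \<le> r" "r \<le> 1 / (2 * k + 3)"
  shows "bohr_ineq 0 A B r"
proof -
  have holH: "H holomorphic_on ball 0 1" and holG: "G holomorphic_on ball 0 1"
    and bdH: "\<forall>z\<in>ball 0 1. norm (H z) \<le> 1"
    and sA: "\<forall>z\<in>ball 0 1. (\<lambda>n. A n * z ^ n) sums H z"
    and sB: "\<forall>z\<in>ball 0 1. (\<lambda>n. B (Suc n) * z ^ Suc n) sums G z"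
    and dG: "\<forall>z\<in>ball 0 1. norm (deriv G z) \<le> k * norm (deriv H z)"
    using hyp by (simp_all add: harm_hyp_def)
  have "1 / (2 * k + 3) \<le> 1 / 3" using k by (simp add: field_simps)
  then have r3: "r \<le> 1 / 3" using r by linarith
  define a0 where "a0 = norm (A 0)"
  have "A 0 = H 0" using sA by (metis centre_in_ball powser_sums_zero_iff zero_less_one)
  then have a0: "0 \<le> a0" "a0 \<le> 1" using bdH by (auto simp: a0_def)
  have A_coeff: "norm (A (Suc j)) \<le> 1 - a0 ^ 2" for j
    using Wiener_coeff_bound[OF sA bdH] by (simp add: a0_def)
  note A_tail = geometric_tail_bound[of "\<lambda>j. norm (A j)", OF norm_ge_zero A_coeff r(1)]
  define T where "T = (\<Sum>j. norm (A (Suc j)) * r ^ Suc j)"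
  have T: "0 \<le> T" "T \<le> (1 - a0 ^ 2) * r / (1 - r)"
    using A_tail(1,4) r r3 by (auto simp: T_def a0_def intro: suminf_nonneg)
  obtain \<omega> where hol\<omega>: "\<omega> holomorphic_on ball 0 1" and \<omega>k: "\<And>z. z \<in> ball 0 1 \<Longrightarrow> norm (\<omega> z) \<le> k"
    and factor: "\<And>z. z \<in> ball 0 1 \<Longrightarrow> deriv G z = \<omega> z * deriv H z"
    using holomorphic_quotient_of_dominated[of "deriv H" "ball 0 1" "deriv G" k]
      holomorphic_deriv[OF holH] holomorphic_deriv[OF holG] k dG by auto
  define W where "W j = (deriv ^^ j) \<omega> 0 / fact j" for j
  have sW: "\<forall>z\<in>ball 0 1. (\<lambda>j. W j * z ^ j) sums \<omega> z"
    using holomorphic_power_series[OF hol\<omega>] by (simp add: W_def)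
  have "\<forall>z\<in>ball 0 1. norm (\<omega> z) \<le> k" using \<omega>k by blast
  note W_Bohr = Bohr_one_third[OF sW this r(1) r3]
  have "norm (B (Suc n)) * r ^ Suc n
      \<le> (\<Sum>i\<le>n. norm (W i) * r ^ i * (norm (A (Suc (n - i))) * r ^ Suc (n - i)))" for n
  proof -
    have "norm (B (Suc n)) * r ^ Suc n \<le> (\<Sum>i\<le>n. norm (W i) * norm (A (Suc (n - i)))) * r ^ Suc n"
      using coeff_bound_of_deriv_factorization[OF sA sB sW factor] r(1) by (intro mult_right_mono) auto
    also have "\<dots> = (\<Sum>i\<le>n. norm (W i) * r ^ i * (norm (A (Suc (n - i))) * r ^ Suc (n - i)))"
      unfolding sum_distrib_right by (intro sum.cong refl) (simp add: power_add[symmetric] mult_ac)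
    finally show ?thesis .
  qed
  from Cauchy_product_majorant[OF _ this _ W_Bohr(1) _ A_tail(1)]
  have B_sum: "summable (\<lambda>n. norm (B (Suc n)) * r ^ Suc n)"
    "(\<Sum>n. norm (B (Suc n)) * r ^ Suc n) \<le> (\<Sum>j. norm (W j) * r ^ j) * T"
    using r r3 by (simp_all add: T_def)
  have "(\<Sum>j. norm (W j) * r ^ j) * T \<le> k * T"
    using W_Bohr(2) T(1) by (rule mult_right_mono)
  moreover have "(\<Sum>n. norm (A n) * r ^ n) = a0 + T" using A_tail(3) r3 by (simp add: T_def a0_def)
  ultimately show ?thesis
    unfolding bohr_ineq_0_iff using A_tail(2) r3 B_sum Bohr_sum_le_1_arith[OF a0 T(2) k r] by simp
qed

definition Moebius_coeff :: "real \<Rightarrow> nat \<Rightarrow> real" where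
  "Moebius_coeff \<alpha> n = (if n = 0 then \<alpha> else - (1 - \<alpha> ^ 2) * \<alpha> ^ (n - 1))"

lemma Moebius_coeff_Suc_sums:
  fixes \<alpha> :: real and z :: "'a :: {real_normed_field, banach}"
  assumes "norm (of_real \<alpha> * z) < 1"
  shows "(\<lambda>n. of_real (Moebius_coeff \<alpha> (Suc n)) * z ^ Suc n) sums
           (- of_real (1 - \<alpha> ^ 2) * z / (1 - of_real \<alpha> * z))"
proof -
  have "(\<lambda>n. (- of_real (1 - \<alpha> ^ 2) * z) * (of_real \<alpha> * z) ^ n) sums
          ((- of_real (1 - \<alpha> ^ 2) * z) * (1 / (1 - of_real \<alpha> * z)))"
    using assms by (intro sums_mult geometric_sums)
  then show ?thesis
    by (simp add: Moebius_coeff_def power_mult_distrib mult_ac)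
qed

lemma Moebius_coeff_sums:
  fixes \<alpha> :: real and z :: complex
  assumes "norm (of_real \<alpha> * z) < 1"
  shows "(\<lambda>n. of_real (Moebius_coeff \<alpha> n) * z ^ n) sums ((of_real \<alpha> - z) / (1 - of_real \<alpha> * z))"
proof -
  have "1 - of_real \<alpha> * z \<noteq> 0" using assms by (metis norm_one order.irrefl right_minus_eq)
  then have "(of_real \<alpha> - z) / (1 - of_real \<alpha> * z) =
               - of_real (1 - \<alpha> ^ 2) * z / (1 - of_real \<alpha> * z) + of_real (Moebius_coeff \<alpha> 0) * z ^ 0"
    by (simp add: Moebius_coeff_def field_simps power2_eq_square)
  with Moebius_coeff_Suc_sums[OF assms] show ?thesis by (subst (asm) sums_Suc_iff) simp
qed

lemma harm_hyp_0_Moebius: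
  fixes \<alpha> k :: real
  assumes \<alpha>: "\<bar>\<alpha>\<bar> < 1" and k: "0 \<le> k"
  defines "H \<equiv> \<lambda>z. (of_real \<alpha> - z) / (1 - of_real \<alpha> * z)"
  shows "harm_hyp 0 k H (\<lambda>z. of_real k * (H z - of_real \<alpha>))
           (\<lambda>n. of_real (Moebius_coeff \<alpha> n)) (\<lambda>n. of_real (k * Moebius_coeff \<alpha> n))"
proof -
  have small: "norm (of_real \<alpha> * z) < 1" if "z \<in> ball 0 1" for z :: complex
    using norm_mult_less[of "of_real \<alpha>" 1 z 1] that \<alpha> by simp
  have nz: "1 - of_real \<alpha> * z \<noteq> 0" if "z \<in> ball 0 1" for z :: complex
    using small[OF that] by (metis norm_one order.irrefl right_minus_eq)
  have holH: "H holomorphic_on ball 0 1"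
    unfolding H_def using nz by (auto intro!: holomorphic_intros)
  have "H z = - Moebius_function 0 (of_real \<alpha>) z" for z
    by (simp add: H_def Moebius_function_simple minus_divide_left)
  then have "norm (H z) \<le> 1" if "z \<in> ball 0 1" for z
    using that \<alpha> Moebius_function_norm_lt_1[of "of_real \<alpha>" z 0] by simp
  moreover have "(\<lambda>n. of_real (Moebius_coeff \<alpha> n) * z ^ n) sums H z" if "z \<in> ball 0 1" for z
    unfolding H_def by (rule Moebius_coeff_sums[OF small[OF that]])
  moreover have "(\<lambda>n. of_real (k * Moebius_coeff \<alpha> (Suc n)) * z ^ Suc n) sums (of_real k * (H z - of_real \<alpha>))"
    if "z \<in> ball 0 1" for z
  proof -
    have "(\<lambda>n. of_real (Moebius_coeff \<alpha> (Suc n)) * z ^ Suc n) sums (H z - of_real \<alpha>)"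
      using \<open>z \<in> ball 0 1\<close> calculation(2)[OF that] by (subst sums_Suc_iff) (simp add: Moebius_coeff_def)
    then show ?thesis by (simp add: mult.assoc sums_mult)
  qed
  moreover have "deriv (\<lambda>z. of_real k * (H z - of_real \<alpha>)) z = of_real k * deriv H z" if "z \<in> ball 0 1" for z
  proof (rule DERIV_imp_deriv)
    have "(H has_field_derivative deriv H z) (at z)"
      using holH that by (intro holomorphic_derivI[of _ "ball 0 1"]) auto
    then show "((\<lambda>z. of_real k * (H z - of_real \<alpha>)) has_field_derivative of_real k * deriv H z) (at z)"
      by (auto intro!: derivative_eq_intros)
  qed
  ultimately show ?thesis
    using holH k by (auto simp: harm_hyp_def norm_mult intro!: holomorphic_intros)
qed

lemma Moebius_coeff_norm_sums:
  fixes \<alpha> s :: real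
  assumes \<alpha>: "0 \<le> \<alpha>" "\<alpha> < 1" and s: "0 \<le> s" "s < 1"
  shows "(\<lambda>n. \<bar>Moebius_coeff \<alpha> (Suc n)\<bar> * s ^ Suc n) sums ((1 - \<alpha> ^ 2) * s / (1 - \<alpha> * s))"
    "(\<lambda>n. \<bar>Moebius_coeff \<alpha> n\<bar> * s ^ n) sums (\<alpha> + (1 - \<alpha> ^ 2) * s / (1 - \<alpha> * s))"
proof -
  have "\<alpha> * s < 1" using \<alpha> s by (simp add: mult_le_one order.strict_trans1[OF mult_left_le_one_le])
  then have "(\<lambda>n. ((1 - \<alpha> ^ 2) * s) * (\<alpha> * s) ^ n) sums (((1 - \<alpha> ^ 2) * s) * (1 / (1 - \<alpha> * s)))"
    using \<alpha> s by (intro sums_mult geometric_sums) simp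
  moreover have "\<bar>Moebius_coeff \<alpha> (Suc n)\<bar> * s ^ Suc n = ((1 - \<alpha> ^ 2) * s) * (\<alpha> * s) ^ n" for n
    using \<alpha> s by (simp add: Moebius_coeff_def abs_mult power_le_one power_mult_distrib)
  ultimately show tail: "(\<lambda>n. \<bar>Moebius_coeff \<alpha> (Suc n)\<bar> * s ^ Suc n) sums ((1 - \<alpha> ^ 2) * s / (1 - \<alpha> * s))"
    by (simp only: times_divide_eq_right mult_1_right)
  then show "(\<lambda>n. \<bar>Moebius_coeff \<alpha> n\<bar> * s ^ n) sums (\<alpha> + (1 - \<alpha> ^ 2) * s / (1 - \<alpha> * s))"
    using \<alpha> by (subst (asm) sums_Suc_iff) (simp add: Moebius_coeff_def add.commute)
qed

lemma Moebius_majorant_gt_1: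
  fixes k s :: real
  assumes k: "0 \<le> k" and s: "1 / (2 * k + 3) < s" "s < 1"
  obtains \<alpha> where "0 < \<alpha>" "\<alpha> < 1" "1 < \<alpha> + (1 + k) * ((1 - \<alpha> ^ 2) * s / (1 - \<alpha> * s))"
proof -
  \<comment> \<open>the excess over 1 is \<open>(1 - \<alpha>) ((1 + k) (1 + \<alpha>) s / (1 - \<alpha> s) - 1)\<close>, positive iff \<open>\<alpha> > \<alpha>0\<close>\<close>
  define \<alpha>0 where "\<alpha>0 = (1 - s * (1 + k)) / (s * (2 + k))"
  have "0 < 1 / (2 * k + 3)" using k by simp
  then have s0: "0 < s" using s(1) by linarith
  have "1 < s * (2 * k + 3)" using s k by (simp add: field_simps)
  then have "\<alpha>0 < 1" using s0 k by (simp add: \<alpha>0_def field_simps)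
  define \<alpha> where "\<alpha> = (max \<alpha>0 0 + 1) / 2"
  have \<alpha>: "0 < \<alpha>" "\<alpha> < 1" "\<alpha>0 < \<alpha>" using \<open>\<alpha>0 < 1\<close> by (auto simp: \<alpha>_def)
  have \<alpha>s: "\<alpha> * s < 1 * 1" using \<alpha> s s0 by (intro mult_strict_mono) auto
  have "0 < s * (2 + k)" using s0 k by simp
  then have "1 - s * (1 + k) < \<alpha> * (s * (2 + k))" using \<alpha>(3) by (simp add: \<alpha>0_def pos_divide_less_eq)
  then have "1 < (1 + k) * (1 + \<alpha>) * s / (1 - \<alpha> * s)" using \<alpha>s by (simp add: field_simps)
  then have "(1 - \<alpha>) * 1 < (1 - \<alpha>) * ((1 + k) * (1 + \<alpha>) * s / (1 - \<alpha> * s))"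
    using \<alpha> by (intro mult_strict_left_mono) auto
  also have "\<dots> = (1 + k) * ((1 - \<alpha> ^ 2) * s / (1 - \<alpha> * s))"
    by (simp add: power2_eq_square algebra_simps)
  finally show ?thesis using \<alpha> by (intro that[of \<alpha>]) auto
qed

lemma bohr_ineq_smaller_radius:
  assumes "bohr_ineq \<gamma> a b \<rho>" "\<gamma> < 1" "0 \<le> s" "s \<le> \<rho>"
  shows "bohr_ineq \<gamma> a b s"
proof -
  have comparison: "summable (\<lambda>n. c n * s ^ e n) \<and> (\<Sum>n. c n * s ^ e n) \<le> (\<Sum>n. c n * \<rho> ^ e n)"
    if "summable (\<lambda>n. c n * \<rho> ^ e n)" "\<And>n. 0 \<le> c n" for c :: "nat \<Rightarrow> real" and e :: "nat \<Rightarrow> nat"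
  proof -
    have le: "c n * s ^ e n \<le> c n * \<rho> ^ e n" for n
      using that(2) assms(3,4) by (intro mult_left_mono power_mono) auto
    have "summable (\<lambda>n. c n * s ^ e n)"
      by (rule summable_comparison_test'[OF that(1), of 0]) (use le that(2) assms(3) in auto)
    with le that(1) show ?thesis by (auto intro: suminf_le)
  qed
  have nonneg: "0 \<le> norm (x :: complex) / (1 - \<gamma>) ^ n" for x n using assms(2) by simp
  from assms(1) show ?thesis
    using comparison[of "\<lambda>n. norm (a n) / (1 - \<gamma>) ^ n" "\<lambda>n. n", OF _ nonneg]
      comparison[of "\<lambda>n. norm (b (Suc n)) / (1 - \<gamma>) ^ Suc n" Suc, OF _ nonneg]
    unfolding bohr_ineq_def by auto
qed

theorem Bohr_harmonic_unit_disk_sharp: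
  fixes k \<rho> :: real
  assumes k: "0 \<le> k" and \<rho>: "1 / (2 * k + 3) < \<rho>"
  shows "\<exists>H G a b. harm_hyp 0 k H G a b \<and> \<not> bohr_ineq 0 a b \<rho>"
proof -
  define s where "s = min \<rho> (1 / 2)"
  have "1 / (2 * k + 3) < 1 / 2" using k by (simp add: field_simps)
  then have s: "1 / (2 * k + 3) < s" "s < 1" "s \<le> \<rho>" using \<rho> by (auto simp: s_def)
  moreover have "0 < 1 / (2 * k + 3)" using k by simp
  ultimately have "0 \<le> s" by linarith
  obtain \<alpha> where \<alpha>: "0 < \<alpha>" "\<alpha> < 1" and big: "1 < \<alpha> + (1 + k) * ((1 - \<alpha> ^ 2) * s / (1 - \<alpha> * s))"
    using Moebius_majorant_gt_1[OF k s(1,2)] by blast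
  define a where "a = (\<lambda>n. complex_of_real (Moebius_coeff \<alpha> n))"
  define b where "b = (\<lambda>n. complex_of_real (k * Moebius_coeff \<alpha> n))"
  define X where "X = (1 - \<alpha> ^ 2) * s / (1 - \<alpha> * s)"
  have "(\<lambda>n. norm (a n) * s ^ n) sums (\<alpha> + X)"
    using Moebius_coeff_norm_sums(2)[of \<alpha> s] \<alpha> s \<open>0 \<le> s\<close> by (simp add: a_def X_def)
  moreover have "(\<lambda>n. norm (b (Suc n)) * s ^ Suc n) sums (k * X)"
    using sums_mult[OF Moebius_coeff_norm_sums(1)[of \<alpha> s], of k] \<alpha> s \<open>0 \<le> s\<close> k
    by (simp add: b_def X_def norm_mult abs_of_nonneg mult.assoc del: power_Suc)
  moreover have "1 < \<alpha> + X + k * X" using big unfolding X_def[symmetric] by (simp add: distrib_right)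
  ultimately have "\<not> bohr_ineq 0 a b s" by (auto simp: bohr_ineq_0_iff sums_iff)
  then have "\<not> bohr_ineq 0 a b \<rho>" using bohr_ineq_smaller_radius \<open>0 \<le> s\<close> s(3) by auto
  moreover have "harm_hyp 0 k (\<lambda>z. (of_real \<alpha> - z) / (1 - of_real \<alpha> * z))
      (\<lambda>z. of_real k * ((of_real \<alpha> - z) / (1 - of_real \<alpha> * z) - of_real \<alpha>)) a b"
    unfolding a_def b_def using \<alpha> k by (intro harm_hyp_0_Moebius) auto
  ultimately show ?thesis by blast
qed

definition Omega_rescale :: "real \<Rightarrow> real \<Rightarrow> complex \<Rightarrow> complex" where
  "Omega_rescale \<gamma>' \<gamma> w = omega_center \<gamma> + of_real ((1 - \<gamma>') / (1 - \<gamma>)) * (w - omega_center \<gamma>')"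

lemma harm_hyp_rescale:
  fixes \<gamma> \<gamma>' :: real
  assumes \<gamma>: "\<gamma> < 1" "\<gamma>' < 1" and hyp: "harm_hyp \<gamma> k h g a b"
  defines "\<sigma> \<equiv> (1 - \<gamma>') / (1 - \<gamma>)"
  shows "harm_hyp \<gamma>' k (h \<circ> Omega_rescale \<gamma>' \<gamma>) (g \<circ> Omega_rescale \<gamma>' \<gamma>)
           (\<lambda>n. a n * of_real \<sigma> ^ n) (\<lambda>n. b n * of_real \<sigma> ^ n)"
proof -
  let ?\<phi> = "Omega_rescale \<gamma>' \<gamma>"
  have \<sigma>: "\<sigma> > 0" using \<gamma> by (simp add: \<sigma>_def)
  have shift: "?\<phi> w - omega_center \<gamma> = of_real \<sigma> * (w - omega_center \<gamma>')" for w
    by (simp add: Omega_rescale_def \<sigma>_def)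
  have maps: "?\<phi> w \<in> Omega \<gamma>" if "w \<in> Omega \<gamma>'" for w
  proof -
    have "norm (w - omega_center \<gamma>') < 1 / (1 - \<gamma>')"
      using that by (simp add: Omega_def dist_norm norm_minus_commute)
    then have "\<sigma> * norm (w - omega_center \<gamma>') < \<sigma> * (1 / (1 - \<gamma>'))"
      using \<sigma> by (intro mult_strict_left_mono)
    also have "\<dots> = 1 / (1 - \<gamma>)" using \<gamma> by (simp add: \<sigma>_def field_simps)
    finally have "\<sigma> * norm (w - omega_center \<gamma>') < 1 / (1 - \<gamma>)" .
    moreover have "\<sigma> * norm (w - omega_center \<gamma>') = dist (omega_center \<gamma>) (?\<phi> w)"
      using \<sigma> by (simp add: dist_norm norm_minus_commute[of "omega_center \<gamma>"] shift norm_mult)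
    ultimately show ?thesis by (simp add: Omega_def)
  qed
  have open_Omega: "open (Omega \<gamma>)" by (simp add: Omega_def)
  have d\<phi>: "(?\<phi> has_field_derivative of_real \<sigma>) (at w)" for w
    unfolding Omega_rescale_def \<sigma>_def using \<gamma> by (auto intro!: derivative_eq_intros)
  have hol\<phi>: "?\<phi> holomorphic_on Omega \<gamma>'"
    unfolding Omega_rescale_def by (intro holomorphic_intros)
  have hol: "f \<circ> ?\<phi> holomorphic_on Omega \<gamma>'" if "f holomorphic_on Omega \<gamma>" for f
    using maps by (intro holomorphic_on_compose[OF hol\<phi>] holomorphic_on_subset[OF that]) auto
  have deriv: "deriv (f \<circ> ?\<phi>) w = deriv f (?\<phi> w) * of_real \<sigma>"
    if "f holomorphic_on Omega \<gamma>" "w \<in> Omega \<gamma>'" for f w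
  proof -
    have f: "f field_differentiable at (?\<phi> w)"
      using that maps open_Omega by (auto intro: holomorphic_on_imp_differentiable_at)
    have "?\<phi> field_differentiable at w" using d\<phi> by (auto simp: field_differentiable_def)
    from deriv_chain[OF this f] show ?thesis by (simp only: DERIV_imp_deriv[OF d\<phi>])
  qed
  have rescaled_term: "c * (?\<phi> w - omega_center \<gamma>) ^ n = c * of_real \<sigma> ^ n * (w - omega_center \<gamma>') ^ n"
    for c w and n :: nat by (simp add: shift power_mult_distrib)
  from hyp show ?thesis
    unfolding harm_hyp_def
  proof (elim conjE, intro conjI ballI)
    fix w assume w: "w \<in> Omega \<gamma>'"
    assume "\<forall>z\<in>Omega \<gamma>. (\<lambda>n. a n * (z - omega_center \<gamma>) ^ n) sums h z"
    then have "(\<lambda>n. a n * (?\<phi> w - omega_center \<gamma>) ^ n) sums h (?\<phi> w)" using maps[OF w] by blast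
    then show "(\<lambda>n. a n * of_real \<sigma> ^ n * (w - omega_center \<gamma>') ^ n) sums (h \<circ> ?\<phi>) w"
      by (simp only: rescaled_term o_apply)
    assume "\<forall>z\<in>Omega \<gamma>. (\<lambda>n. b (Suc n) * (z - omega_center \<gamma>) ^ Suc n) sums g z"
    then have "(\<lambda>n. b (Suc n) * (?\<phi> w - omega_center \<gamma>) ^ Suc n) sums g (?\<phi> w)" using maps[OF w] by blast
    then show "(\<lambda>n. b (Suc n) * of_real \<sigma> ^ Suc n * (w - omega_center \<gamma>') ^ Suc n) sums (g \<circ> ?\<phi>) w"
      by (simp only: rescaled_term o_apply)
    assume "h holomorphic_on Omega \<gamma>" "g holomorphic_on Omega \<gamma>"
      and "\<forall>z\<in>Omega \<gamma>. norm (deriv g z) \<le> k * norm (deriv h z)"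
    with maps[OF w] w \<sigma> show "norm (deriv (g \<circ> ?\<phi>) w) \<le> k * norm (deriv (h \<circ> ?\<phi>) w)"
      by (simp add: deriv norm_mult mult_right_mono)
  qed (use maps hol in auto)
qed

lemma bohr_ineq_rescale:
  fixes \<gamma> \<gamma>' :: real
  assumes "\<gamma> < 1" "\<gamma>' < 1"
  defines "\<sigma> \<equiv> (1 - \<gamma>') / (1 - \<gamma>)"
  shows "bohr_ineq \<gamma>' (\<lambda>n. a n * of_real \<sigma> ^ n) (\<lambda>n. b n * of_real \<sigma> ^ n) \<rho> \<longleftrightarrow> bohr_ineq \<gamma> a b \<rho>"
proof -
  have "\<sigma> / (1 - \<gamma>') = 1 / (1 - \<gamma>)" "\<sigma> > 0" using assms by (simp_all add: \<sigma>_def)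
  have "norm (c * of_real \<sigma> ^ n) / (1 - \<gamma>') ^ n = norm c / (1 - \<gamma>) ^ n" for c :: complex and n
  proof -
    have "norm (c * of_real \<sigma> ^ n) / (1 - \<gamma>') ^ n = norm c * (\<sigma> / (1 - \<gamma>')) ^ n"
      using \<open>\<sigma> > 0\<close> by (simp add: norm_mult norm_power power_divide)
    also have "\<dots> = norm c / (1 - \<gamma>) ^ n" by (simp add: \<open>\<sigma> / (1 - \<gamma>') = 1 / (1 - \<gamma>)\<close> power_divide)
    finally show ?thesis .
  qed
  then show ?thesis by (simp only: bohr_ineq_def)
qed

lemma counterexample_rescale:
  assumes "\<gamma> < 1" "\<gamma>' < 1" "harm_hyp \<gamma> k h g a b" "\<not> bohr_ineq \<gamma> a b \<rho>"
  shows "\<exists>h g a b. harm_hyp \<gamma>' k h g a b \<and> \<not> bohr_ineq \<gamma>' a b \<rho>"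
  using harm_hyp_rescale[OF assms(1-3)] bohr_ineq_rescale[OF assms(1,2)] assms(4) by blast

theorem theorem2p2:
  fixes \<gamma> k :: real
  assumes "0 \<le> \<gamma>" "\<gamma> < 1" "0 \<le> k" "k < 1"
  shows "(\<forall>h g a b \<rho>. harm_hyp \<gamma> k h g a b \<longrightarrow> 0 \<le> \<rho> \<longrightarrow> \<rho> \<le> 1 / (2 * k + 3)
            \<longrightarrow> bohr_ineq \<gamma> a b \<rho>)
       \<and> (\<forall>\<rho>. \<rho> > 1 / (2 * k + 3) \<longrightarrow>
            (\<exists>h g a b. harm_hyp \<gamma> k h g a b \<and> \<not> bohr_ineq \<gamma> a b \<rho>))"
proof (intro conjI allI impI)
  fix h g a b and \<rho> :: real
  assume hyp: "harm_hyp \<gamma> k h g a b" and \<rho>: "0 \<le> \<rho>" "\<rho> \<le> 1 / (2 * k + 3)"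
  show "bohr_ineq \<gamma> a b \<rho>"
  proof (rule ccontr)
    assume "\<not> bohr_ineq \<gamma> a b \<rho>"
    then obtain H G A B where "harm_hyp 0 k H G A B" "\<not> bohr_ineq 0 A B \<rho>"
      using counterexample_rescale[OF assms(2) zero_less_one hyp] by blast
    then show False using Bohr_harmonic_unit_disk assms(3) \<rho> by blast
  qed
next
  fix \<rho> :: real
  assume "1 / (2 * k + 3) < \<rho>"
  then obtain H G A B where "harm_hyp 0 k H G A B" "\<not> bohr_ineq 0 A B \<rho>"
    using Bohr_harmonic_unit_disk_sharp assms(3) by blast
  then show "\<exists>h g a b. harm_hyp \<gamma> k h g a b \<and> \<not> bohr_ineq \<gamma> a b \<rho>"
    using counterexample_rescale[OF zero_less_one assms(2)] by blast
qed

end
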